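(* Assume $\rho=\rho_1$. Let $Y=(-\infty,1]\sqcup\big([0,\rho]\times\{\infty\}\big)$ with the following topology: $(-\infty,1]$ is an open subset carrying its usual topology; for $x\in[0,\rho]$, a base of neighborhoods of $(x,\infty)$ is formed by the sets $$\{(y,\infty): y\in[0,\rho],\ |y-x|<\varepsilon\}\ \cup\ \bigcup_{n>N}\Big(\big((-1)^n x-2\lfloor n/2\rfloor\rho-\varepsilon,\ (-1)^n x-2\lfloor n/2\rfloor\rho+\varepsilon\big)\cap(-\infty,1]\Big),$$ for $\varepsilon>0$, $N\in\mathbb N$. Then $(\widetilde X,\widetilde f)$ is topologically conjugate to $(Y,g)$, where $g$ is the homeomorphism of $Y$ given by $g(x)=\frac{x-\rho}{1-\rho}$ for $x\in(\rho,1]$, $g(x)=x-\rho$ for $x\in(-\infty,\rho]$, and $g(x,\infty)=(\rho-x,\infty)$ for $x\in[0,\rho]$. The conjugating homeomorphism maps $\widetilde X_1$ onto $(-\infty,1]$ and $\widetilde X\setminus\widetilde X_1$ onto $[0,\rho]\times\{\infty\}$. In particular $\widetilde f$ is an increasing map on the ray $(-\infty,1]$ with fixed point $1$, and an involution on $[0,\rho]\times\{\infty\}$.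
   Context: Standing setup. Fix real numbers $\rho,\delta,\gamma,\alpha$ with $0<\rho<1$, $\delta>0$, $\gamma>-\delta/\rho$, $-\delta/\rho<\alpha<0$. Define $f:[0,1]\to[0,1]$ by $f(x)=f_0(x):=\frac{\alpha x-\alpha\rho}{\gamma x+\delta}$ for $x\in[0,\rho]$ and $f(x)=f_1(x):=\frac{x-\rho}{1-\rho}$ for $x\in(\rho,1]$. Put $\rho_1:=f_0(0)$. The inverse limit is $\widetilde X=\{(x_0,x_1,\dots)\in[0,1]^{\mathbb N}: f(x_{n+1})=x_n \ \forall n\}$ with the product topology; the shift is $\widetilde f(x_0,x_1,\dots)=(f(x_0),x_0,x_1,\dots)$. $\widetilde X_1:=\{(x_0,x_1,\dots)\in\widetilde X:\lim_n x_n=1\}$. $\lfloor\cdot\rfloor$ is the integer part. *)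

theory Defs
  imports "HOL-Analysis.Analysis"
begin

definition f0 :: "real \<Rightarrow> real \<Rightarrow> real \<Rightarrow> real \<Rightarrow> real \<Rightarrow> real" where
  "f0 \<rho> \<delta> \<gamma> \<alpha> x = (\<alpha> * x - \<alpha> * \<rho>) / (\<gamma> * x + \<delta>)"

definition f1 :: "real \<Rightarrow> real \<Rightarrow> real" where
  "f1 \<rho> x = (x - \<rho>) / (1 - \<rho>)"

definition fmap :: "real \<Rightarrow> real \<Rightarrow> real \<Rightarrow> real \<Rightarrow> real \<Rightarrow> real" where
  "fmap \<rho> \<delta> \<gamma> \<alpha> x = (if x \<le> \<rho> then f0 \<rho> \<delta> \<gamma> \<alpha> x else f1 \<rho> x)"

definition invlim :: "(real \<Rightarrow> real) \<Rightarrow> (nat \<Rightarrow> real) set" where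
  "invlim f = {x. (\<forall>n. x n \<in> {0..1}) \<and> (\<forall>n. f (x (Suc n)) = x n)}"

definition invlim_top :: "(real \<Rightarrow> real) \<Rightarrow> (nat \<Rightarrow> real) topology" where
  "invlim_top f = subtopology (powertop_real UNIV) (invlim f)"

definition shift :: "(real \<Rightarrow> real) \<Rightarrow> (nat \<Rightarrow> real) \<Rightarrow> (nat \<Rightarrow> real)" where
  "shift f x = (\<lambda>n. case n of 0 \<Rightarrow> f (x 0) | Suc m \<Rightarrow> x m)"

definition invlim1 :: "(real \<Rightarrow> real) \<Rightarrow> (nat \<Rightarrow> real) set" where
  "invlim1 f = {x \<in> invlim f. x \<longlonglongrightarrow> 1}"

text \<open>The space Y = (-infty,1] disjoint-union [0,rho] x {infty}, encoded in real + real: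
  Inl x stands for x in (-infty,1], Inr x stands for (x,infty), x in [0,rho].\<close>

definition Ycarrier :: "real \<Rightarrow> (real + real) set" where
  "Ycarrier \<rho> = Inl ` {..1} \<union> Inr ` {0..\<rho>}"

definition Ybasic :: "real \<Rightarrow> (real + real) \<Rightarrow> (real + real) set set" where
  "Ybasic \<rho> p = (case p of
     Inl x \<Rightarrow> {Inl ` ({x - \<epsilon> <..< x + \<epsilon>} \<inter> {..1}) | \<epsilon>. \<epsilon> > 0}
   | Inr x \<Rightarrow> {Inr ` {y \<in> {0..\<rho>}. \<bar>y - x\<bar> < \<epsilon>}
              \<union> Inl ` (\<Union>n\<in>{n::nat. n > N}.
                   {(-1)^n * x - 2 * of_int \<lfloor>real n / 2\<rfloor> * \<rho> - \<epsilon> <..<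
                    (-1)^n * x - 2 * of_int \<lfloor>real n / 2\<rfloor> * \<rho> + \<epsilon>} \<inter> {..1})
              | \<epsilon> N. \<epsilon> > 0})"

definition Ytop :: "real \<Rightarrow> (real + real) topology" where
  "Ytop \<rho> = topology (\<lambda>U. U \<subseteq> Ycarrier \<rho> \<and> (\<forall>p\<in>U. \<exists>B\<in>Ybasic \<rho> p. B \<subseteq> U))"

definition gmap :: "real \<Rightarrow> (real + real) \<Rightarrow> (real + real)" where
  "gmap \<rho> p = (case p of
     Inl x \<Rightarrow> (if x > \<rho> then Inl ((x - \<rho>) / (1 - \<rho>)) else Inl (x - \<rho>))
   | Inr x \<Rightarrow> Inr (\<rho> - x))"

end

theory Submission
  imports Defs
begin

text \<open>
  The hypothesis \<open>\<rho> = f0 0\<close> forces \<open>\<alpha> = -\<delta>\<close>, and then \<open>f0\<close> is a continuous decreasing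
  involution of \<open>[0,\<rho>]\<close>; nothing else about \<open>f0\<close> is used.  The coordinate
  \<open>phi x = (x + \<rho> - f0 x) / 2\<close> conjugates \<open>f0\<close> to the reflection \<open>x \<mapsto> \<rho> - x\<close>, and
  transporting \<open>phi\<close> along the linear branch \<open>f1\<close> gives a homeomorphism \<open>Phi\<close> of \<open>[0,1]\<close>
  commuting with \<open>f1\<close> above \<open>\<rho>\<close>.

  A point of the inverse limit either keeps all its coordinates in \<open>[0,\<rho>]\<close>, and then
  alternates between \<open>x\<^sub>0\<close> and \<open>f0 x\<^sub>0\<close> and is recorded by \<open>(phi x\<^sub>0, \<infinity>)\<close>; or
  its coordinates eventually exceed \<open>\<rho>\<close> and stay there, it lies in \<open>X\<^sub>1\<close>, and
  \<open>g\<^sup>n (Phi x\<^sub>n)\<close> is the same point of \<open>(-\<infinity>,1]\<close> for every such \<open>n\<close>.  If the first \<open>m\<close>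
  coordinates stay in \<open>[0,\<rho>]\<close>, that point is \<open>(-1)\<^sup>m phi x\<^sub>0 - 2\<lfloor>m/2\<rfloor>\<rho>\<close>, which is why
  the neighbourhoods of \<open>(x,\<infinity>)\<close> in \<open>Y\<close> have their peculiar shape and the map is
  continuous.  A continuous bijection from the compact inverse limit onto the Hausdorff
  space \<open>Y\<close> is a homeomorphism, and it turns the shift into \<open>g\<close>.
\<close>

section \<open>Inverse limits of self-maps of the unit interval\<close>

lemma invlimD:
  assumes "x \<in> invlim f"
  shows "x n \<in> {0..1}" "f (x (Suc n)) = x n"
  using assms by (auto simp: invlim_def)

lemma topspace_invlim_top [simp]: "topspace (invlim_top f) = invlim f"
  by (simp add: invlim_top_def)

lemma shift_Suc [simp]: "shift f x (Suc n) = x n"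
  by (simp add: shift_def)

lemma shift_0 [simp]: "shift f x 0 = f (x 0)"
  by (simp add: shift_def)

lemma shift_in_invlim:
  assumes "f ` {0..1} \<subseteq> {0..1}" "x \<in> invlim f"
  shows "shift f x \<in> invlim f"
proof -
  have "f (x 0) \<in> {0..1}" using assms invlimD(1)[OF assms(2), of 0] by blast
  then have "shift f x n \<in> {0..1}" for n
    using invlimD[OF assms(2)] by (cases n) auto
  moreover have "f (shift f x (Suc n)) = shift f x n" for n
    using invlimD[OF assms(2)] by (cases n) auto
  ultimately show ?thesis by (simp add: invlim_def)
qed

lemma shift_tail:
  assumes "x \<in> invlim f"
  shows "(\<lambda>n. x (Suc n)) \<in> invlim f" "shift f (\<lambda>n. x (Suc n)) = x"
proof -
  show "(\<lambda>n. x (Suc n)) \<in> invlim f" using assms by (simp add: invlim_def)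
  show "shift f (\<lambda>n. x (Suc n)) = x"
  proof
    fix n show "shift f (\<lambda>n. x (Suc n)) n = x n" using invlimD[OF assms] by (cases n) auto
  qed
qed

lemma continuous_map_coordinate:
  "continuous_map (subtopology (powertop_real UNIV) S) euclideanreal (\<lambda>x. x n)"
  by (intro continuous_map_from_subtopology continuous_map_product_projection) simp

lemma openin_cylinder:
  fixes x :: "nat \<Rightarrow> real"
  shows "openin (powertop_real UNIV) {y. \<forall>i\<le>K. \<bar>y i - x i\<bar> < e}"
proof -
  have coordinate_open:
    "openin (powertop_real UNIV) {y \<in> topspace (powertop_real UNIV). y i \<in> {x i - e<..<x i + e}}" for i
    by (rule openin_continuous_map_preimage) (auto intro: continuous_map_product_projection)
  have "openin (powertop_real UNIV)
      ((\<Inter>i\<in>{..K}. {y \<in> topspace (powertop_real UNIV). y i \<in> {x i - e<..<x i + e}}) \<inter> topspace (powertop_real UNIV))"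
    by (rule openin_INT) (use coordinate_open in auto)
  moreover have "(\<Inter>i\<in>{..K}. {y \<in> topspace (powertop_real UNIV). y i \<in> {x i - e<..<x i + e}}) \<inter> topspace (powertop_real UNIV)
      = {y. \<forall>i\<le>K. \<bar>y i - x i\<bar> < e}"
    by (force simp: abs_less_iff)
  ultimately show ?thesis by simp
qed

lemma Hausdorff_space_invlim_top: "Hausdorff_space (invlim_top f)"
  unfolding invlim_top_def
  by (intro Hausdorff_space_subtopology) (simp add: Hausdorff_space_product_topology)

lemma continuous_map_coordinate_comp:
  assumes "continuous_on {0..1} f"
  shows "continuous_map (subtopology (powertop_real UNIV) (Pi\<^sub>E UNIV (\<lambda>_. {0..1})))
           euclideanreal (\<lambda>x. f (x n))"
proof -
  have "continuous_map (subtopology (powertop_real UNIV) (Pi\<^sub>E UNIV (\<lambda>_. {0..1})))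
          (top_of_set {0..1}) (\<lambda>x. x n)"
    by (rule continuous_map_into_subtopology[OF continuous_map_coordinate]) auto
  moreover have "continuous_map (top_of_set {0..1}) euclideanreal f" using assms by simp
  ultimately show ?thesis by (rule continuous_map_compose[unfolded o_def])
qed

lemma compact_space_invlim_top:
  assumes "continuous_on {0..1} f"
  shows "compact_space (invlim_top f)"
proof -
  let ?B = "subtopology (powertop_real UNIV) (Pi\<^sub>E UNIV (\<lambda>_::nat. {0..1::real}))"
  have "compact_space ?B"
    by (intro compact_space_subtopology) (simp add: compactin_PiE)
  moreover have "closedin ?B {x \<in> topspace ?B. f (x (Suc n)) = x n}" for n
    by (rule closedin_continuous_maps_eq[OF Hausdorff_space_euclidean
          continuous_map_coordinate_comp[OF assms] continuous_map_coordinate])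
  then have "closedin ?B (\<Inter>n. {x \<in> topspace ?B. f (x (Suc n)) = x n})"
    by (intro closedin_Inter) auto
  moreover have "(\<Inter>n. {x \<in> topspace ?B. f (x (Suc n)) = x n}) = invlim f"
    by (auto simp: invlim_def PiE_def extensional_def Pi_iff)
  ultimately have "compactin ?B (invlim f)"
    by (simp add: closedin_compact_space)
  then show ?thesis
    unfolding invlim_top_def by (simp add: compactin_subtopology compact_space_subtopology)
qed

lemma homeomorphic_map_shift:
  assumes "continuous_on {0..1} f" "f ` {0..1} \<subseteq> {0..1}"
  shows "homeomorphic_map (invlim_top f) (invlim_top f) (shift f)"
proof (rule continuous_imp_homeomorphic_map)
  have "continuous_map (invlim_top f) euclideanreal (\<lambda>x. shift f x k)" for k
  proof (cases k)
    case 0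
    have "continuous_map (invlim_top f) euclideanreal (\<lambda>x. f (x 0))"
      unfolding invlim_top_def
      by (rule continuous_map_from_subtopology_mono[OF continuous_map_coordinate_comp[OF assms(1)]])
        (auto simp: invlim_def)
    then show ?thesis using 0 by simp
  qed (simp add: invlim_top_def continuous_map_coordinate)
  then show "continuous_map (invlim_top f) (invlim_top f) (shift f)"
    using shift_in_invlim[OF assms(2)]
    by (auto simp: invlim_top_def continuous_map_in_subtopology continuous_map_componentwise_UNIV)
  show "shift f ` topspace (invlim_top f) = topspace (invlim_top f)"
    using shift_in_invlim[OF assms(2)] shift_tail by (force simp: image_iff)
  show "inj_on (shift f) (topspace (invlim_top f))"
  proof (rule inj_onI)
    fix x y assume "shift f x = shift f y"
    then have "shift f x (Suc n) = shift f y (Suc n)" for n by simp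
    then show "x = y" by (simp add: fun_eq_iff)
  qed
qed (use compact_space_invlim_top[OF assms(1)] Hausdorff_space_invlim_top in auto)

lemma homeomorphic_map_conjugate:
  assumes h: "homeomorphic_map X Y h" and s: "homeomorphic_map X X s"
    and conj: "\<And>x. x \<in> topspace X \<Longrightarrow> h (s x) = g (h x)"
  shows "homeomorphic_map Y Y g"
proof -
  obtain k where k: "homeomorphic_maps X Y h k"
    using h homeomorphic_map_maps by blast
  then have k_hom: "homeomorphic_map Y X k" and hk: "\<And>y. y \<in> topspace Y \<Longrightarrow> h (k y) = y"
    and k_in: "\<And>y. y \<in> topspace Y \<Longrightarrow> k y \<in> topspace X"
    by (auto simp: homeomorphic_maps_map dest: homeomorphic_imp_continuous_map continuous_map_image_subset_topspace)
  show ?thesis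
  proof (rule homeomorphic_map_eq)
    show "homeomorphic_map Y Y (h \<circ> (s \<circ> k))"
      by (intro homeomorphic_map_compose[OF homeomorphic_map_compose[OF k_hom s] h])
    show "(h \<circ> (s \<circ> k)) y = g y" if "y \<in> topspace Y" for y
      using conj[OF k_in[OF that]] hk[OF that] by simp
  qed
qed

section \<open>The space \<open>Y\<close> and the map \<open>g\<close>\<close>

definition ray_nbhd :: "real \<Rightarrow> real \<Rightarrow> (real + real) set" where
  "ray_nbhd x e = Inl ` ({x - e<..<x + e} \<inter> {..1})"

text \<open>The centres of the basic neighbourhoods of \<open>(x, \<infinity>)\<close> on the ray; see
  \<open>ray_coord_first_exit\<close> for where they come from.\<close>

definition ray_approx :: "real \<Rightarrow> nat \<Rightarrow> real \<Rightarrow> real" where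
  "ray_approx \<rho> n x = (-1) ^ n * x - 2 * of_int \<lfloor>real n / 2\<rfloor> * \<rho>"

definition end_nbhd :: "real \<Rightarrow> real \<Rightarrow> real \<Rightarrow> nat \<Rightarrow> (real + real) set" where
  "end_nbhd \<rho> x e N = Inr ` {y \<in> {0..\<rho>}. \<bar>y - x\<bar> < e} \<union> (\<Union>n\<in>{N<..}. ray_nbhd (ray_approx \<rho> n x) e)"

lemma Ybasic_Inl: "Ybasic \<rho> (Inl x) = {ray_nbhd x e | e. e > 0}"
  by (simp add: Ybasic_def ray_nbhd_def)

lemma end_nbhd_eq:
  "end_nbhd \<rho> x e N = Inr ` {y \<in> {0..\<rho>}. \<bar>y - x\<bar> < e}
     \<union> Inl ` ((\<Union>n\<in>{n. n > N}. {ray_approx \<rho> n x - e<..<ray_approx \<rho> n x + e}) \<inter> {..1})"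
  by (auto simp: end_nbhd_def ray_nbhd_def)

lemma Ybasic_Inr: "Ybasic \<rho> (Inr x) = {end_nbhd \<rho> x e N | e N. e > 0}"
  by (simp add: Ybasic_def end_nbhd_eq ray_approx_def)

lemma ray_approx_eq: "ray_approx \<rho> n x = (if even n then x - real n * \<rho> else - x - (real n - 1) * \<rho>)"
proof -
  have "\<lfloor>real n / 2\<rfloor> = int (n div 2)"
    using floor_divide_of_nat_eq[of n 2] by simp
  moreover have "2 * real (n div 2) = (if even n then real n else real n - 1)"
    by (cases "even n") (auto elim!: evenE oddE)
  ultimately show ?thesis by (simp add: ray_approx_def)
qed

lemma abs_ray_approx_diff: "\<bar>ray_approx \<rho> n y - ray_approx \<rho> n x\<bar> = \<bar>y - x\<bar>"
proof -
  have "ray_approx \<rho> n y - ray_approx \<rho> n x = (-1) ^ n * (y - x)"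
    by (simp add: ray_approx_def algebra_simps)
  then show ?thesis by (simp add: abs_mult)
qed

lemma ray_nbhd_subset: "\<bar>c' - c\<bar> + e' \<le> e \<Longrightarrow> ray_nbhd c' e' \<subseteq> ray_nbhd c e"
  unfolding ray_nbhd_def by (intro image_mono) (auto simp: abs_le_iff)

lemma ray_nbhd_mono: "e \<le> e' \<Longrightarrow> ray_nbhd x e \<subseteq> ray_nbhd x e'"
  by (simp add: ray_nbhd_subset)

lemma end_nbhd_mono: "e \<le> e' \<Longrightarrow> N' \<le> N \<Longrightarrow> end_nbhd \<rho> x e N \<subseteq> end_nbhd \<rho> x e' N'"
  unfolding end_nbhd_def by (intro Un_mono image_mono UN_mono ray_nbhd_mono) auto

lemma Ybasic_directed:
  assumes "B1 \<in> Ybasic \<rho> p" "B2 \<in> Ybasic \<rho> p"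
  shows "\<exists>B\<in>Ybasic \<rho> p. B \<subseteq> B1 \<inter> B2"
proof (cases p)
  case (Inl x)
  then obtain e1 e2 where "e1 > 0" "e2 > 0" "B1 = ray_nbhd x e1" "B2 = ray_nbhd x e2"
    using assms by (auto simp: Ybasic_Inl)
  then show ?thesis
    unfolding Inl Ybasic_Inl
    using ray_nbhd_mono[of "min e1 e2" e1 x] ray_nbhd_mono[of "min e1 e2" e2 x]
    by (intro bexI[of _ "ray_nbhd x (min e1 e2)"]) auto
next
  case (Inr x)
  then obtain e1 e2 N1 N2 where "e1 > 0" "e2 > 0" "B1 = end_nbhd \<rho> x e1 N1" "B2 = end_nbhd \<rho> x e2 N2"
    using assms by (auto simp: Ybasic_Inr)
  then show ?thesis
    unfolding Inr Ybasic_Inr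
    using end_nbhd_mono[of "min e1 e2" e1 N1 "max N1 N2" \<rho> x]
      end_nbhd_mono[of "min e1 e2" e2 N2 "max N1 N2" \<rho> x]
    by (intro bexI[of _ "end_nbhd \<rho> x (min e1 e2) (max N1 N2)"]) auto
qed

lemma openin_Ytop:
  "openin (Ytop \<rho>) U \<longleftrightarrow> U \<subseteq> Ycarrier \<rho> \<and> (\<forall>p\<in>U. \<exists>B\<in>Ybasic \<rho> p. B \<subseteq> U)"
proof -
  have "istopology (\<lambda>U. U \<subseteq> Ycarrier \<rho> \<and> (\<forall>p\<in>U. \<exists>B\<in>Ybasic \<rho> p. B \<subseteq> U))"
    unfolding istopology_def
  proof (rule conjI; intro allI impI)
    fix S T
    assume S: "S \<subseteq> Ycarrier \<rho> \<and> (\<forall>p\<in>S. \<exists>B\<in>Ybasic \<rho> p. B \<subseteq> S)"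
      and T: "T \<subseteq> Ycarrier \<rho> \<and> (\<forall>p\<in>T. \<exists>B\<in>Ybasic \<rho> p. B \<subseteq> T)"
    show "S \<inter> T \<subseteq> Ycarrier \<rho> \<and> (\<forall>p\<in>S \<inter> T. \<exists>B\<in>Ybasic \<rho> p. B \<subseteq> S \<inter> T)"
    proof (intro conjI ballI)
      show "S \<inter> T \<subseteq> Ycarrier \<rho>" using S by blast
      fix p assume "p \<in> S \<inter> T"
      then obtain B1 B2 where "B1 \<in> Ybasic \<rho> p" "B1 \<subseteq> S" "B2 \<in> Ybasic \<rho> p" "B2 \<subseteq> T"
        using S T by blast
      moreover obtain B where "B \<in> Ybasic \<rho> p" "B \<subseteq> B1 \<inter> B2"
        using Ybasic_directed calculation by blast
      ultimately show "\<exists>B\<in>Ybasic \<rho> p. B \<subseteq> S \<inter> T" by blast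
    qed
  next
    fix K assume K: "\<forall>S\<in>K. S \<subseteq> Ycarrier \<rho> \<and> (\<forall>p\<in>S. \<exists>B\<in>Ybasic \<rho> p. B \<subseteq> S)"
    show "\<Union>K \<subseteq> Ycarrier \<rho> \<and> (\<forall>p\<in>\<Union>K. \<exists>B\<in>Ybasic \<rho> p. B \<subseteq> \<Union>K)"
    proof (intro conjI ballI)
      show "\<Union>K \<subseteq> Ycarrier \<rho>" using K by blast
      fix p assume "p \<in> \<Union>K"
      then obtain S where "S \<in> K" "p \<in> S" by blast
      with K obtain B where "B \<in> Ybasic \<rho> p" "B \<subseteq> S" by blast
      with \<open>S \<in> K\<close> show "\<exists>B\<in>Ybasic \<rho> p. B \<subseteq> \<Union>K" by blast
    qed
  qed
  then show ?thesis by (simp add: Ytop_def)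
qed

lemma openin_ray_nbhd: "openin (Ytop \<rho>) (ray_nbhd x e)"
  unfolding openin_Ytop
proof (intro conjI ballI)
  show "ray_nbhd x e \<subseteq> Ycarrier \<rho>" by (auto simp: ray_nbhd_def Ycarrier_def)
  fix p assume "p \<in> ray_nbhd x e"
  then obtain y where y: "p = Inl y" "\<bar>y - x\<bar> < e" by (auto simp: ray_nbhd_def)
  then have "ray_nbhd y (e - \<bar>y - x\<bar>) \<in> Ybasic \<rho> p" by (auto simp: Ybasic_Inl)
  moreover have "ray_nbhd y (e - \<bar>y - x\<bar>) \<subseteq> ray_nbhd x e" by (rule ray_nbhd_subset) simp
  ultimately show "\<exists>B\<in>Ybasic \<rho> p. B \<subseteq> ray_nbhd x e" by blast
qed

lemma openin_end_nbhd: "openin (Ytop \<rho>) (end_nbhd \<rho> x e N)"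
  unfolding openin_Ytop
proof (intro conjI ballI)
  show "end_nbhd \<rho> x e N \<subseteq> Ycarrier \<rho>" by (auto simp: end_nbhd_def ray_nbhd_def Ycarrier_def)
  fix p assume p: "p \<in> end_nbhd \<rho> x e N"
  show "\<exists>B\<in>Ybasic \<rho> p. B \<subseteq> end_nbhd \<rho> x e N"
  proof (cases p)
    case (Inl z)
    then obtain n where "n > N" "p \<in> ray_nbhd (ray_approx \<rho> n x) e"
      using p by (auto simp: end_nbhd_def ray_nbhd_def)
    moreover have "openin (Ytop \<rho>) (ray_nbhd (ray_approx \<rho> n x) e)"
      by (rule openin_ray_nbhd)
    ultimately obtain B where "B \<in> Ybasic \<rho> p" "B \<subseteq> ray_nbhd (ray_approx \<rho> n x) e"
      unfolding openin_Ytop by blast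
    with \<open>n > N\<close> show ?thesis by (auto simp: end_nbhd_def)
  next
    case (Inr y)
    then have y: "y \<in> {0..\<rho>}" "\<bar>y - x\<bar> < e"
      using p by (auto simp: end_nbhd_def ray_nbhd_def)
    have "ray_nbhd (ray_approx \<rho> n y) (e - \<bar>y - x\<bar>) \<subseteq> ray_nbhd (ray_approx \<rho> n x) e" for n
      by (intro ray_nbhd_subset) (simp add: abs_ray_approx_diff)
    then have "end_nbhd \<rho> y (e - \<bar>y - x\<bar>) N \<subseteq> end_nbhd \<rho> x e N"
      unfolding end_nbhd_def by fastforce
    with y show ?thesis
      unfolding Inr Ybasic_Inr by (intro bexI[of _ "end_nbhd \<rho> y (e - \<bar>y - x\<bar>) N"]) auto
  qed
qed

lemma topspace_Ytop [simp]: "topspace (Ytop \<rho>) = Ycarrier \<rho>"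
proof (rule subset_antisym)
  show "topspace (Ytop \<rho>) \<subseteq> Ycarrier \<rho>" using openin_Ytop[of \<rho> "topspace (Ytop \<rho>)"] by simp
  show "Ycarrier \<rho> \<subseteq> topspace (Ytop \<rho>)"
  proof
    fix p assume "p \<in> Ycarrier \<rho>"
    then have "p \<in> ray_nbhd (projl p) 1 \<or> p \<in> end_nbhd \<rho> (projr p) 1 0"
      by (auto simp: Ycarrier_def ray_nbhd_def end_nbhd_def)
    then show "p \<in> topspace (Ytop \<rho>)"
      using openin_subset[OF openin_ray_nbhd[where \<rho>=\<rho> and x="projl p" and e=1]]
        openin_subset[OF openin_end_nbhd[where \<rho>=\<rho> and x="projr p" and e=1 and N=0]] by blast
  qed
qed

lemma ray_approx_le:
  assumes "0 \<le> x" "0 \<le> \<rho>"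
  shows "ray_approx \<rho> n x \<le> (2 - real n) * \<rho> + x"
  using assms by (simp add: ray_approx_eq algebra_simps)

lemma ray_approx_dist_ge:
  assumes x: "x \<in> {0..\<rho>}" and y: "y \<in> {0..\<rho>}"
  shows "min \<bar>x - y\<bar> (min (x + y) (2 * \<rho> - x - y)) \<le> \<bar>ray_approx \<rho> n x - ray_approx \<rho> m y\<bar>"
proof -
  define j where "j = int (m div 2) - int (n div 2)"
  define s s' :: real where "s = (-1) ^ n" and "s' = (-1) ^ m"
  have "\<lfloor>real k / 2\<rfloor> = int (k div 2)" for k
    using floor_divide_of_nat_eq[of k 2] by simp
  then have diff: "ray_approx \<rho> n x - ray_approx \<rho> m y = s * x - s' * y + 2 * of_int j * \<rho>"
    by (simp add: ray_approx_def j_def s_def s'_def algebra_simps)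
  have s: "s = 1 \<or> s = -1" "s' = 1 \<or> s' = -1"
    unfolding s_def s'_def by (cases "even n"; simp) (cases "even m"; simp)
  then have sum_bound: "- (x + y) \<le> s * x - s' * y" "s * x - s' * y \<le> x + y"
    using x y by auto
  consider "j = 0" | "j \<ge> 1" | "j \<le> -1" by linarith
  then show ?thesis
  proof cases
    case 1
    then show ?thesis using s x y unfolding diff by (auto simp: abs_minus_commute)
  next
    case 2
    then have "1 * \<rho> \<le> of_int j * \<rho>" using x by (intro mult_right_mono) auto
    then have "2 * \<rho> - x - y \<le> \<bar>s * x - s' * y + 2 * of_int j * \<rho>\<bar>"
      using sum_bound by linarith
    then show ?thesis unfolding diff by (simp add: min_le_iff_disj)
  next
    case 3
    then have "of_int j * \<rho> \<le> -1 * \<rho>" using x by (intro mult_right_mono) auto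
    then have "2 * \<rho> - x - y \<le> \<bar>s * x - s' * y + 2 * of_int j * \<rho>\<bar>"
      using sum_bound by linarith
    then show ?thesis unfolding diff by (simp add: min_le_iff_disj)
  qed
qed

lemma disjnt_ray_nbhd: "2 * e \<le> \<bar>a - b\<bar> \<Longrightarrow> disjnt (ray_nbhd a e) (ray_nbhd b e)"
  by (auto simp: disjnt_def ray_nbhd_def abs_le_iff)

lemma disjnt_ray_nbhd_end_nbhd:
  assumes "0 < \<rho>" "x \<in> {0..\<rho>}"
  obtains N where "disjnt (ray_nbhd a 1) (end_nbhd \<rho> x 1 N)"
proof
  define N where "N = nat \<lceil>(4 - a) / \<rho>\<rceil> + 3"
  have "ray_approx \<rho> n x + 2 \<le> a" if "n > N" for n
  proof -
    have "(4 - a) / \<rho> + 2 \<le> real n - 2" using that unfolding N_def by linarith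
    then have "(4 - a) + 2 * \<rho> \<le> (real n - 2) * \<rho>"
      using assms(1) by (simp add: field_simps)
    then show ?thesis using ray_approx_le[of x \<rho> n] assms by (simp add: algebra_simps)
  qed
  then show "disjnt (ray_nbhd a 1) (end_nbhd \<rho> x 1 N)"
    by (fastforce simp: end_nbhd_def disjnt_def ray_nbhd_def)
qed

lemma disjnt_end_nbhd:
  assumes "x \<in> {0..\<rho>}" "y \<in> {0..\<rho>}" "2 * e \<le> min \<bar>x - y\<bar> (min (x + y) (2 * \<rho> - x - y))"
  shows "disjnt (end_nbhd \<rho> x e N) (end_nbhd \<rho> y e N)"
proof -
  have "disjnt (ray_nbhd (ray_approx \<rho> n x) e) (ray_nbhd (ray_approx \<rho> m y) e)" for n m
    by (intro disjnt_ray_nbhd order_trans[OF assms(3) ray_approx_dist_ge[OF assms(1,2)]])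
  moreover have "\<bar>x - y\<bar> \<ge> 2 * e" using assms(3) by simp
  ultimately show ?thesis
    by (auto simp: disjnt_def end_nbhd_def ray_nbhd_def abs_le_iff)
qed

lemma Ytop_separated:
  assumes "0 < \<rho>" "p \<in> Ycarrier \<rho>" "q \<in> Ycarrier \<rho>" "p \<noteq> q" "isl p \<or> \<not> isl q"
  shows "\<exists>U V. openin (Ytop \<rho>) U \<and> openin (Ytop \<rho>) V \<and> p \<in> U \<and> q \<in> V \<and> disjnt U V"
proof -
  consider (rays) a b where "p = Inl a" "q = Inl b" | (mixed) a y where "p = Inl a" "q = Inr y"
    | (ends) x y where "p = Inr x" "q = Inr y"
    using \<open>isl p \<or> \<not> isl q\<close> by (cases p; cases q) auto
  then show ?thesis
  proof cases
    case rays
    then have "a \<le> 1" "b \<le> 1" "a \<noteq> b" using assms by (auto simp: Ycarrier_def)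
    then have "p \<in> ray_nbhd a (\<bar>a - b\<bar> / 2)" "q \<in> ray_nbhd b (\<bar>a - b\<bar> / 2)"
      using rays by (auto simp: ray_nbhd_def)
    moreover have "disjnt (ray_nbhd a (\<bar>a - b\<bar> / 2)) (ray_nbhd b (\<bar>a - b\<bar> / 2))"
      by (rule disjnt_ray_nbhd) simp
    ultimately show ?thesis using openin_ray_nbhd
      by (intro exI[of _ "ray_nbhd a (\<bar>a - b\<bar> / 2)"] exI[of _ "ray_nbhd b (\<bar>a - b\<bar> / 2)"]) simp
  next
    case mixed
    then have "a \<le> 1" "y \<in> {0..\<rho>}" using assms by (auto simp: Ycarrier_def)
    moreover obtain N where "disjnt (ray_nbhd a 1) (end_nbhd \<rho> y 1 N)"
      using disjnt_ray_nbhd_end_nbhd[OF assms(1) \<open>y \<in> {0..\<rho>}\<close>] .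
    ultimately show ?thesis using mixed openin_ray_nbhd openin_end_nbhd
      by (intro exI[of _ "ray_nbhd a 1"] exI[of _ "end_nbhd \<rho> y 1 N"]) (auto simp: ray_nbhd_def end_nbhd_def)
  next
    case ends
    then have x: "x \<in> {0..\<rho>}" and y: "y \<in> {0..\<rho>}" and "x \<noteq> y"
      using assms by (auto simp: Ycarrier_def)
    define e where "e = min \<bar>x - y\<bar> (min (x + y) (2 * \<rho> - x - y)) / 2"
    have "e > 0" using x y \<open>x \<noteq> y\<close> by (auto simp: e_def)
    then have "p \<in> end_nbhd \<rho> x e 0" "q \<in> end_nbhd \<rho> y e 0"
      using ends x y by (auto simp: end_nbhd_def)
    moreover have "disjnt (end_nbhd \<rho> x e 0) (end_nbhd \<rho> y e 0)"
      by (rule disjnt_end_nbhd[OF x y]) (simp add: e_def)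
    ultimately show ?thesis using openin_end_nbhd
      by (intro exI[of _ "end_nbhd \<rho> x e 0"] exI[of _ "end_nbhd \<rho> y e 0"]) simp
  qed
qed

lemma Hausdorff_space_Ytop:
  assumes "0 < \<rho>"
  shows "Hausdorff_space (Ytop \<rho>)"
  unfolding Hausdorff_space_def topspace_Ytop
proof (intro allI impI)
  fix p q assume pq: "p \<in> Ycarrier \<rho> \<and> q \<in> Ycarrier \<rho> \<and> p \<noteq> q"
  show "\<exists>U V. openin (Ytop \<rho>) U \<and> openin (Ytop \<rho>) V \<and> p \<in> U \<and> q \<in> V \<and> disjnt U V"
  proof (cases "isl p \<or> \<not> isl q")
    case True then show ?thesis using Ytop_separated[OF assms] pq by blast
  next
    case False
    then obtain U V where "openin (Ytop \<rho>) U" "openin (Ytop \<rho>) V" "q \<in> U" "p \<in> V" "disjnt U V"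
      using Ytop_separated[OF assms, of q p] pq by blast
    then show ?thesis using disjnt_sym by blast
  qed
qed

definition ray_map :: "real \<Rightarrow> real \<Rightarrow> real" where
  "ray_map \<rho> s = (if s \<le> \<rho> then s - \<rho> else f1 \<rho> s)"

lemma gmap_Inl: "gmap \<rho> (Inl s) = Inl (ray_map \<rho> s)"
  by (simp add: gmap_def ray_map_def f1_def)

lemma gmap_Inr: "gmap \<rho> (Inr x) = Inr (\<rho> - x)"
  by (simp add: gmap_def)

lemma ray_map_1: "\<rho> < 1 \<Longrightarrow> ray_map \<rho> 1 = 1"
  by (simp add: ray_map_def f1_def)

lemma ray_map_le_1: "\<rho> < 1 \<Longrightarrow> s \<le> 1 \<Longrightarrow> ray_map \<rho> s \<le> 1"
  by (simp add: ray_map_def f1_def divide_le_eq)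

lemma funpow_ray_map_le_1: "\<rho> < 1 \<Longrightarrow> s \<le> 1 \<Longrightarrow> (ray_map \<rho> ^^ n) s \<le> 1"
  by (induction n) (simp_all add: ray_map_le_1)

lemma funpow_ray_map_below:
  assumes "0 \<le> \<rho>" "s \<le> \<rho>"
  shows "(ray_map \<rho> ^^ n) s = s - real n * \<rho>"
proof (induction n)
  case (Suc n)
  have "s - real n * \<rho> \<le> \<rho>" using assms by (simp add: order_trans[of _ s])
  with Suc show ?case by (simp add: ray_map_def algebra_simps)
qed simp

lemma strict_mono_ray_map:
  assumes "\<rho> < 1"
  shows "strict_mono (ray_map \<rho>)"
proof (rule strict_monoI)
  fix s t :: real assume "s < t"
  consider "t \<le> \<rho>" | "s \<le> \<rho>" "\<rho> < t" | "\<rho> < s" by linarith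
  then show "ray_map \<rho> s < ray_map \<rho> t"
  proof cases
    case 2
    then have "s - \<rho> < (t - \<rho>) / (1 - \<rho>)"
      using assms by (smt (verit) divide_pos_pos)
    with 2 show ?thesis by (simp add: ray_map_def f1_def)
  qed (use \<open>s < t\<close> assms in \<open>auto simp: ray_map_def f1_def divide_strict_right_mono\<close>)
qed

lemma continuous_on_ray_map: "\<rho> < 1 \<Longrightarrow> continuous_on UNIV (ray_map \<rho>)"
  unfolding ray_map_def f1_def
  by (intro continuous_on_cases_le[where h="\<lambda>s. s", simplified] continuous_intros) auto

lemma continuous_on_funpow_ray_map:
  assumes "\<rho> < 1"
  shows "continuous_on UNIV (ray_map \<rho> ^^ n)"
proof (induction n)
  case (Suc n)
  show ?case
    using continuous_on_compose[OF Suc.IH continuous_on_subset[OF continuous_on_ray_map[OF assms]]]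
    by simp
qed (simp add: id_def)

section \<open>Linearising the interval map\<close>

locale involutive_branch =
  fixes \<rho> :: real and F :: "real \<Rightarrow> real"
  assumes rho_pos: "0 < \<rho>" and rho_less_1: "\<rho> < 1"
    and continuous_on_F: "continuous_on {0..\<rho>} F"
    and F_decreasing: "\<And>x y. 0 \<le> x \<Longrightarrow> x < y \<Longrightarrow> y \<le> \<rho> \<Longrightarrow> F y < F x"
    and F_F: "\<And>x. x \<in> {0..\<rho>} \<Longrightarrow> F (F x) = x"
    and F_0: "F 0 = \<rho>"
begin

lemma F_rho: "F \<rho> = 0"
  using F_F[of 0] F_0 rho_pos by simp

lemma F_range: "x \<in> {0..\<rho>} \<Longrightarrow> F x \<in> {0..\<rho>}"
  using F_decreasing[of 0 x] F_decreasing[of x \<rho>] F_0 F_rho by (cases "x = 0 \<or> x = \<rho>") auto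

definition f :: "real \<Rightarrow> real" where
  "f x = (if x \<le> \<rho> then F x else f1 \<rho> x)"

lemma f_range: "f ` {0..1} \<subseteq> {0..1}"
proof -
  have "f x \<in> {0..1}" if "x \<in> {0..1}" for x
    using that F_range[of x] rho_less_1
    by (cases "x \<le> \<rho>") (auto simp: f_def f1_def divide_le_eq)
  then show ?thesis by blast
qed

lemma continuous_on_f: "continuous_on {0..1} f"
proof -
  have "continuous_on {0..1} (\<lambda>x. if x \<le> \<rho> then F x else f1 \<rho> x)"
  proof (rule continuous_on_cases_le[where h="\<lambda>x. x"])
    show "continuous_on {x \<in> {0..1}. x \<le> \<rho>} F"
      by (rule continuous_on_subset[OF continuous_on_F]) auto
    show "continuous_on {x \<in> {0..1}. \<rho> \<le> x} (f1 \<rho>)"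
      unfolding f1_def by (intro continuous_intros) (use rho_less_1 in auto)
  qed (auto simp: F_rho f1_def intro: continuous_on_id)
  then show ?thesis by (simp add: f_def[abs_def])
qed

definition phi :: "real \<Rightarrow> real" where
  "phi x = (x + \<rho> - F x) / 2"

lemma phi_F: "x \<in> {0..\<rho>} \<Longrightarrow> phi (F x) = \<rho> - phi x"
  by (simp add: phi_def F_F field_simps)

lemma phi_0: "phi 0 = 0"
  by (simp add: phi_def F_0)

lemma phi_rho: "phi \<rho> = \<rho>"
  by (simp add: phi_def F_rho)

lemma strict_mono_on_phi: "strict_mono_on {0..\<rho>} phi"
  by (rule strict_mono_onI) (use F_decreasing in \<open>force simp: phi_def\<close>)

lemma phi_range: "x \<in> {0..\<rho>} \<Longrightarrow> phi x \<in> {0..\<rho>}"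
  using strict_mono_onD[OF strict_mono_on_phi, of 0 x] strict_mono_onD[OF strict_mono_on_phi, of x \<rho>]
    phi_0 phi_rho by (cases "x = 0 \<or> x = \<rho>") auto

lemma continuous_on_phi: "continuous_on {0..\<rho>} phi"
  unfolding phi_def by (intro continuous_intros continuous_on_F) simp

lemma phi_image: "phi ` {0..\<rho>} = {0..\<rho>}"
proof
  show "{0..\<rho>} \<subseteq> phi ` {0..\<rho>}"
  proof
    fix u assume "u \<in> {0..\<rho>}"
    then obtain a where "a \<in> {0..\<rho>}" "phi a = u"
      using IVT'[of phi 0 u \<rho>] phi_0 phi_rho continuous_on_phi by auto
    then show "u \<in> phi ` {0..\<rho>}" by blast
  qed
qed (use phi_range in blast)

lemma funpow_f1: "(f1 \<rho> ^^ k) y = 1 - (1 - y) / (1 - \<rho>) ^ k"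
proof (induction k)
  case (Suc k)
  have "(f1 \<rho> ^^ Suc k) y = f1 \<rho> (1 - (1 - y) / (1 - \<rho>) ^ k)" by (simp add: Suc.IH)
  also have "\<dots> = 1 - (1 - y) / (1 - \<rho>) ^ Suc k"
    using rho_less_1 by (simp add: f1_def field_simps)
  finally show ?case .
qed simp

lemma f1_orbit_reaches_rho:
  assumes "y < 1"
  shows "\<exists>k. (f1 \<rho> ^^ k) y \<le> \<rho>"
proof -
  obtain k where k: "(1 - \<rho>) ^ k < 1 - y"
    using real_arch_pow_inv[of "1 - y" "1 - \<rho>"] assms rho_pos by auto
  have "(1 - \<rho>) ^ Suc k \<le> (1 - \<rho>) ^ k"
    using rho_pos rho_less_1 by (intro power_decreasing) auto
  with k have "(1 - \<rho>) * (1 - \<rho>) ^ k \<le> 1 - y" by simp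
  then have "(f1 \<rho> ^^ k) y \<le> \<rho>"
    using rho_less_1 by (simp add: funpow_f1 field_simps)
  then show ?thesis ..
qed

text \<open>\<open>Phi\<close> is forced by \<open>Phi = phi\<close> on \<open>[0,\<rho>]\<close> and \<open>Phi \<circ> f1 = f1 \<circ> Phi\<close> above \<open>\<rho>\<close>:
  follow the \<open>f1\<close>-orbit of \<open>y\<close> until it enters \<open>[0,\<rho>]\<close>, apply \<open>phi\<close>, and undo the
  affine steps.\<close>

definition escape_time :: "real \<Rightarrow> nat" where
  "escape_time y = (LEAST k. (f1 \<rho> ^^ k) y \<le> \<rho>)"

definition Phi :: "real \<Rightarrow> real" where
  "Phi y = (if 1 \<le> y then 1
     else 1 - (1 - \<rho>) ^ escape_time y * (1 - phi ((f1 \<rho> ^^ escape_time y) y)))"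

lemma Phi_below: "y \<in> {0..\<rho>} \<Longrightarrow> Phi y = phi y"
  using rho_less_1 by (simp add: Phi_def escape_time_def)

lemma Phi_0: "Phi 0 = 0"
  using Phi_below[of 0] rho_pos phi_0 by simp

lemma Phi_rho: "Phi \<rho> = \<rho>"
  using Phi_below[of \<rho>] rho_pos phi_rho by simp

lemma Phi_1: "Phi 1 = 1"
  by (simp add: Phi_def)

lemma Phi_f1:
  assumes "\<rho> \<le> y" "y \<le> 1"
  shows "Phi y = \<rho> + (1 - \<rho>) * Phi (f1 \<rho> y)"
proof -
  consider "y = \<rho>" | "y = 1" | "\<rho> < y" "y < 1" using assms by linarith
  then show ?thesis
  proof cases
    case 1
    then show ?thesis using Phi_0 Phi_rho by (simp add: f1_def)
  next
    case 2
    then show ?thesis using Phi_1 rho_less_1 by (simp add: f1_def)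
  next
    case 3
    have "f1 \<rho> y < 1" using 3 rho_less_1 by (simp add: f1_def field_simps)
    obtain n where "(f1 \<rho> ^^ n) y \<le> \<rho>" using f1_orbit_reaches_rho[OF \<open>y < 1\<close>] ..
    then have "escape_time y = Suc (escape_time (f1 \<rho> y))"
      unfolding escape_time_def using 3
      by (subst Least_Suc) (auto simp: funpow_Suc_right simp del: funpow.simps)
    then show ?thesis using 3 \<open>f1 \<rho> y < 1\<close>
      by (simp add: Phi_def funpow_Suc_right algebra_simps del: funpow.simps)
  qed
qed

lemma f1_Phi: "\<rho> < y \<Longrightarrow> y \<le> 1 \<Longrightarrow> f1 \<rho> (Phi y) = Phi (f1 \<rho> y)"
  using Phi_f1[of y] rho_less_1 by (simp add: f1_def)

text \<open>\<open>rung k\<close> is mapped to \<open>\<rho>\<close> by \<open>f1\<^sup>k\<close>; the intervals \<open>{0..rung k}\<close> exhaust \<open>[0,1)\<close>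
  and \<open>Phi\<close> is treated on them by induction on \<open>k\<close>.\<close>

definition rung :: "nat \<Rightarrow> real" where
  "rung k = 1 - (1 - \<rho>) ^ Suc k"

lemma rung_0: "rung 0 = \<rho>"
  by (simp add: rung_def)

lemma rung_less_1: "rung k < 1"
  using rho_less_1 by (simp add: rung_def)

lemma rho_le_rung: "\<rho> \<le> rung k"
proof -
  have "(1 - \<rho>) ^ Suc k \<le> (1 - \<rho>) ^ 1"
    using rho_pos rho_less_1 by (intro power_decreasing) auto
  then show ?thesis by (simp add: rung_def)
qed

lemma f1_rung: "f1 \<rho> (rung (Suc k)) = rung k"
  using rho_less_1 by (simp add: f1_def rung_def field_simps)

lemma f1_maps_rung: "y \<in> {\<rho>..rung (Suc k)} \<Longrightarrow> f1 \<rho> y \<in> {0..rung k}"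
  using rho_less_1 by (auto simp: f1_def rung_def field_simps)

lemma exists_rung_above:
  assumes "y < 1"
  obtains k where "y < rung k"
proof -
  obtain k where "(1 - \<rho>) ^ k < 1 - y"
    using real_arch_pow_inv[of "1 - y" "1 - \<rho>"] assms rho_pos by auto
  moreover have "(1 - \<rho>) ^ Suc k \<le> (1 - \<rho>) ^ k"
    using rho_pos rho_less_1 by (intro power_decreasing) auto
  ultimately show ?thesis using that[of k] by (simp add: rung_def)
qed

lemma Phi_rung: "Phi (rung k) = rung k"
proof (induction k)
  case 0
  show ?case by (simp add: rung_0 Phi_rho)
next
  case (Suc k)
  have "Phi (rung (Suc k)) = \<rho> + (1 - \<rho>) * Phi (rung k)"
    using Phi_f1[OF rho_le_rung less_imp_le[OF rung_less_1]] f1_rung by simp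
  also have "\<dots> = rung (Suc k)"
    unfolding Suc.IH by (simp add: rung_def algebra_simps)
  finally show ?case .
qed

lemma strict_mono_on_Phi_rung: "strict_mono_on {0..rung k} Phi"
proof (induction k)
  case 0
  show ?case
    using strict_mono_onD[OF strict_mono_on_phi] Phi_below
    by (intro strict_mono_onI) (auto simp: rung_0)
next
  case (Suc k)
  show ?case
  proof (rule strict_mono_onI)
    fix a c assume a: "a \<in> {0..rung (Suc k)}" and c: "c \<in> {0..rung (Suc k)}" and "a < c"
    have "c < 1" using c rung_less_1[of "Suc k"] by auto
    consider "c \<le> \<rho>" | "a \<le> \<rho>" "\<rho> < c" | "\<rho> < a" by linarith
    then show "Phi a < Phi c"
    proof cases
      case 1
      then show ?thesis
        using a c \<open>a < c\<close> strict_mono_onD[OF strict_mono_on_phi] Phi_below by auto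
    next
      case 2
      then have "0 < f1 \<rho> c" "f1 \<rho> c \<in> {0..rung k}"
        using c f1_maps_rung rho_less_1 by (auto simp: f1_def)
      then have "0 < Phi (f1 \<rho> c)"
        using strict_mono_onD[OF Suc.IH, of 0 "f1 \<rho> c"] Phi_0 rho_pos by (simp add: rung_def)
      then have "0 < (1 - \<rho>) * Phi (f1 \<rho> c)" using rho_less_1 by simp
      moreover have "Phi a \<le> \<rho>" using 2 a Phi_below phi_range by auto
      ultimately show ?thesis
        using Phi_f1[of c] 2 \<open>c < 1\<close> by simp
    next
      case 3
      have "f1 \<rho> a < f1 \<rho> c" using \<open>a < c\<close> rho_less_1 by (simp add: f1_def divide_strict_right_mono)
      moreover have "f1 \<rho> a \<in> {0..rung k}" "f1 \<rho> c \<in> {0..rung k}"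
        using f1_maps_rung[of a k] f1_maps_rung[of c k] a c 3 \<open>a < c\<close> by auto
      ultimately have "Phi (f1 \<rho> a) < Phi (f1 \<rho> c)"
        using strict_mono_onD[OF Suc.IH] by blast
      then show ?thesis
        using Phi_f1[of a] Phi_f1[of c] 3 \<open>a < c\<close> \<open>c < 1\<close> rho_less_1 by simp
    qed
  qed
qed

lemma continuous_on_Phi_rung: "continuous_on {0..rung k} Phi"
proof (induction k)
  case 0
  show ?case
    unfolding rung_0 using continuous_on_phi by (rule continuous_on_eq) (simp add: Phi_below)
next
  case (Suc k)
  have "continuous_on {\<rho>..rung (Suc k)} (\<lambda>y. \<rho> + (1 - \<rho>) * Phi (f1 \<rho> y))"
    unfolding f1_def
    by (intro continuous_intros continuous_on_compose2[OF Suc.IH])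
      (use rho_less_1 f1_maps_rung in \<open>auto simp: f1_def\<close>)
  moreover have "\<rho> + (1 - \<rho>) * Phi (f1 \<rho> y) = Phi y" if "y \<in> {\<rho>..rung (Suc k)}" for y
    using that rung_less_1[of "Suc k"] Phi_f1[of y] by simp
  ultimately have "continuous_on {\<rho>..rung (Suc k)} Phi"
    by (rule continuous_on_eq)
  moreover have "continuous_on {0..\<rho>} Phi"
    using continuous_on_phi by (rule continuous_on_eq) (simp add: Phi_below)
  ultimately have "continuous_on ({0..\<rho>} \<union> {\<rho>..rung (Suc k)}) Phi"
    by (intro continuous_on_closed_Un) auto
  moreover have "{0..\<rho>} \<union> {\<rho>..rung (Suc k)} = {0..rung (Suc k)}"
    using rho_le_rung[of "Suc k"] rho_pos by auto
  ultimately show ?case by simp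
qed

lemma strict_mono_on_Phi: "strict_mono_on {0..1} Phi"
proof (rule strict_mono_onI)
  fix a c :: real assume a: "a \<in> {0..1}" and c: "c \<in> {0..1}" and "a < c"
  show "Phi a < Phi c"
  proof (cases "c < 1")
    case True
    then obtain k where "c < rung k" by (rule exists_rung_above)
    then show ?thesis using strict_mono_onD[OF strict_mono_on_Phi_rung[of k]] a c \<open>a < c\<close> by auto
  next
    case False
    have "a < 1" using \<open>a < c\<close> c by simp
    then obtain k where "a < rung k" by (rule exists_rung_above)
    then have "Phi a < Phi (rung k)"
      using strict_mono_onD[OF strict_mono_on_Phi_rung[of k], of a "rung k"] a by simp
    then show ?thesis using False c Phi_rung[of k] rung_less_1[of k] Phi_1 by simp
  qed
qed

lemma Phi_range: "y \<in> {0..1} \<Longrightarrow> Phi y \<in> {0..1}"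
  using strict_mono_onD[OF strict_mono_on_Phi, of 0 y] strict_mono_onD[OF strict_mono_on_Phi, of y 1]
    Phi_0 Phi_1 by (cases "y = 0 \<or> y = 1") auto

lemma Phi_gt_rho: "\<rho> < y \<Longrightarrow> y \<le> 1 \<Longrightarrow> \<rho> < Phi y"
  using strict_mono_onD[OF strict_mono_on_Phi, of \<rho> y] Phi_rho rho_pos by simp

lemma continuous_on_Phi: "continuous_on {0..1} Phi"
  unfolding continuous_on_iff
proof (intro ballI allI impI)
  fix x e :: real assume x: "x \<in> {0..1}" and "0 < e"
  show "\<exists>d>0. \<forall>x'\<in>{0..1}. dist x' x < d \<longrightarrow> dist (Phi x') (Phi x) < e"
  proof (cases "x < 1")
    case True
    then obtain k where k: "x < rung k" by (rule exists_rung_above)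
    obtain d where "d > 0" and d: "\<forall>x'\<in>{0..rung k}. dist x' x < d \<longrightarrow> dist (Phi x') (Phi x) < e"
      using continuous_on_Phi_rung[of k] x k \<open>0 < e\<close> unfolding continuous_on_iff by force
    have "\<forall>x'\<in>{0..1}. dist x' x < min d (rung k - x) \<longrightarrow> dist (Phi x') (Phi x) < e"
      using d by (auto simp: dist_real_def)
    with \<open>d > 0\<close> k show ?thesis by (intro exI[of _ "min d (rung k - x)"]) auto
  next
    case False
    then have "x = 1" using x by simp
    have "1 - e < 1" using \<open>0 < e\<close> by simp
    then obtain k where k: "1 - e < rung k" by (rule exists_rung_above)
    have "dist (Phi x') (Phi x) < e" if x': "x' \<in> {0..1}" "dist x' x < 1 - rung k" for x'
    proof -
      have "rung k < x'" using x' \<open>x = 1\<close> by (auto simp: dist_real_def)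
      then have "rung k \<le> Phi x'"
        using strict_mono_onD[OF strict_mono_on_Phi, of "rung k" x'] x' Phi_rung[of k]
          rho_le_rung[of k] rho_pos by auto
      moreover have "Phi x' \<le> 1" using Phi_range x' by auto
      ultimately show ?thesis using \<open>x = 1\<close> Phi_1 k by (auto simp: dist_real_def)
    qed
    then show ?thesis using rung_less_1[of k] by (intro exI[of _ "1 - rung k"]) auto
  qed
qed

lemma Phi_image: "Phi ` {0..1} = {0..1}"
proof
  show "{0..1} \<subseteq> Phi ` {0..1}"
  proof
    fix t :: real assume "t \<in> {0..1}"
    then have "\<exists>y. 0 \<le> y \<and> y \<le> 1 \<and> Phi y = t"
      by (intro IVT' continuous_on_Phi) (auto simp: Phi_0 Phi_1)
    then obtain y where "y \<in> {0..1}" "Phi y = t" by auto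
    then show "t \<in> Phi ` {0..1}" by blast
  qed
qed (use Phi_range in blast)

section \<open>Coordinates on the inverse limit\<close>

lemma f_below: "x \<le> \<rho> \<Longrightarrow> f x = F x"
  by (simp add: f_def)

lemma f_above: "\<rho> < x \<Longrightarrow> f x = f1 \<rho> x"
  by (simp add: f_def)

lemma invlim_above_rho:
  assumes "x \<in> invlim f" "\<rho> < x n"
  shows "\<rho> < x (Suc n)" "x n = f1 \<rho> (x (Suc n))"
proof -
  show "\<rho> < x (Suc n)"
  proof (rule ccontr)
    assume "\<not> \<rho> < x (Suc n)"
    then have "x n = F (x (Suc n))" "x (Suc n) \<in> {0..\<rho>}"
      using invlimD[OF assms(1), of n] invlimD(1)[OF assms(1), of "Suc n"] by (auto simp: f_below)
    with F_range assms(2) show False by fastforce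
  qed
  then show "x n = f1 \<rho> (x (Suc n))"
    using invlimD(2)[OF assms(1), of n] by (simp add: f_above)
qed

lemma invlim_above_rho_mono:
  assumes "x \<in> invlim f" "\<rho> < x n" "n \<le> m"
  shows "\<rho> < x m"
  using assms(3,2) by (induction m rule: dec_induct) (auto intro: invlim_above_rho(1)[OF assms(1)])

lemma invlim_below_rho:
  assumes "x \<in> invlim f" "x (Suc n) \<le> \<rho>"
  shows "x (Suc n) = F (x n)"
proof -
  have "x (Suc n) \<in> {0..\<rho>}" "x n = F (x (Suc n))"
    using invlimD[OF assms(1), of n] invlimD(1)[OF assms(1), of "Suc n"] assms(2)
    by (auto simp: f_below)
  then show ?thesis using F_F by auto
qed

lemma invlim_alternating:
  assumes "x \<in> invlim f" "\<forall>i\<le>m. x i \<le> \<rho>"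
  shows "x m = (if even m then x 0 else F (x 0))"
  using assms(2)
proof (induction m)
  case (Suc m)
  have "x 0 \<in> {0..\<rho>}" using invlimD(1)[OF assms(1)] Suc.prems by auto
  then show ?case
    using Suc invlim_below_rho[OF assms(1), of m] F_F by auto
qed simp

lemma invlim1_iff:
  assumes "x \<in> invlim f"
  shows "x \<in> invlim1 f \<longleftrightarrow> (\<exists>n. \<rho> < x n)"
proof
  assume "x \<in> invlim1 f"
  then have lim: "x \<longlonglongrightarrow> 1" by (simp add: invlim1_def)
  show "\<exists>n. \<rho> < x n"
  proof (rule ccontr)
    assume "\<not> (\<exists>n. \<rho> < x n)"
    then have "\<forall>n\<ge>0. x n \<le> \<rho>" by (simp add: not_less)
    then have "1 \<le> \<rho>" by (intro LIMSEQ_le_const2[OF lim]) blast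
    with rho_less_1 show False by simp
  qed
next
  assume "\<exists>n. \<rho> < x n"
  then obtain n where n: "\<rho> < x n" ..
  have "x (j + n) = 1 - (1 - \<rho>) ^ j * (1 - x n)" for j
  proof (induction j)
    case (Suc j)
    have "\<rho> < x (j + n)" using invlim_above_rho_mono[OF assms n] by simp
    from invlim_above_rho(2)[OF assms this]
    have "x (Suc (j + n)) = \<rho> + (1 - \<rho>) * x (j + n)"
      using rho_less_1 by (simp add: f1_def field_simps)
    then have "x (Suc (j + n)) = \<rho> + (1 - \<rho>) * (1 - (1 - \<rho>) ^ j * (1 - x n))"
      by (simp only: Suc.IH)
    then show ?case by (simp add: algebra_simps)
  qed simp
  moreover have "(\<lambda>j. (1 - \<rho>) ^ j * (1 - x n)) \<longlonglongrightarrow> 0"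
    by (intro tendsto_mult_left_zero LIMSEQ_power_zero) (use rho_pos rho_less_1 in auto)
  then have "(\<lambda>j. 1 - (1 - \<rho>) ^ j * (1 - x n)) \<longlonglongrightarrow> 1 - 0"
    by (intro tendsto_diff tendsto_const)
  ultimately have "(\<lambda>j. x (j + n)) \<longlonglongrightarrow> 1" by simp
  then have "x \<longlonglongrightarrow> 1" by (rule LIMSEQ_offset)
  with assms show "x \<in> invlim1 f" by (simp add: invlim1_def)
qed

lemma not_invlim1_below: "x \<in> invlim f \<Longrightarrow> x \<notin> invlim1 f \<Longrightarrow> x n \<le> \<rho>"
  using invlim1_iff[of x] by (simp add: not_less)

lemma shift_in_invlim1_iff:
  assumes "x \<in> invlim f"
  shows "shift f x \<in> invlim1 f \<longleftrightarrow> x \<in> invlim1 f"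
proof -
  have sx: "shift f x \<in> invlim f" by (rule shift_in_invlim[OF f_range assms])
  have "(\<exists>n. \<rho> < shift f x n) \<longleftrightarrow> (\<exists>n. \<rho> < x n)"
    using invlim_above_rho(1)[OF sx] by (metis shift_Suc)
  then show ?thesis using invlim1_iff[OF assms] invlim1_iff[OF sx] by simp
qed

lemma ray_map_Phi:
  assumes "x \<in> invlim f" "\<rho> < x (Suc n)"
  shows "ray_map \<rho> (Phi (x (Suc n))) = Phi (x n)"
proof -
  have le_1: "x (Suc n) \<le> 1" using invlimD(1)[OF assms(1)] by simp
  have "ray_map \<rho> (Phi (x (Suc n))) = Phi (f1 \<rho> (x (Suc n)))"
    using Phi_gt_rho[OF assms(2) le_1] f1_Phi[OF assms(2) le_1] by (simp add: ray_map_def)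
  also have "f1 \<rho> (x (Suc n)) = x n"
    using invlimD(2)[OF assms(1), of n] assms(2) by (simp add: f_above)
  finally show ?thesis .
qed

text \<open>Meaningful only on \<open>invlim1 f\<close>, where some coordinate exceeds \<open>\<rho>\<close>; every such index
  gives the same value (\<open>ray_coord_eq\<close>).\<close>

definition ray_coord :: "(nat \<Rightarrow> real) \<Rightarrow> real" where
  "ray_coord x = (ray_map \<rho> ^^ (LEAST n. \<rho> < x n)) (Phi (x (LEAST n. \<rho> < x n)))"

lemma ray_coord_eq:
  assumes "x \<in> invlim f" "\<rho> < x n"
  shows "ray_coord x = (ray_map \<rho> ^^ n) (Phi (x n))"
proof -
  define M where "M = (LEAST n. \<rho> < x n)"
  have M: "\<rho> < x M" "M \<le> n"
    unfolding M_def using assms(2) by (auto intro: LeastI Least_le)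
  have "(ray_map \<rho> ^^ (M + j)) (Phi (x (M + j))) = ray_coord x" for j
  proof (induction j)
    case 0
    show ?case by (simp add: ray_coord_def M_def)
  next
    case (Suc j)
    have "\<rho> < x (Suc (M + j))" using invlim_above_rho_mono[OF assms(1) M(1)] by simp
    then show ?case
      using Suc ray_map_Phi[OF assms(1)] by (simp add: funpow_Suc_right del: funpow.simps)
  qed
  from this[of "n - M"] show ?thesis using M(2) by simp
qed

lemma invlim1_obtain_above_rho:
  assumes "x \<in> invlim1 f"
  obtains n where "\<rho> < x n"
  using assms invlim1_iff by (auto simp: invlim1_def)

lemma ray_coord_le_1:
  assumes "x \<in> invlim1 f"
  shows "ray_coord x \<le> 1"
proof -
  have x: "x \<in> invlim f" using assms by (simp add: invlim1_def)
  obtain n where n: "\<rho> < x n" using invlim1_obtain_above_rho[OF assms] .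
  have "Phi (x n) \<le> 1" using Phi_range invlimD(1)[OF x] by auto
  then show ?thesis
    using ray_coord_eq[OF x n] funpow_ray_map_le_1 rho_less_1 by simp
qed

lemma ray_coord_shift:
  assumes "x \<in> invlim1 f"
  shows "ray_coord (shift f x) = ray_map \<rho> (ray_coord x)"
proof -
  have x: "x \<in> invlim f" using assms by (simp add: invlim1_def)
  obtain n where n: "\<rho> < x n" using invlim1_obtain_above_rho[OF assms] .
  have "ray_coord (shift f x) = (ray_map \<rho> ^^ Suc n) (Phi (x n))"
    using ray_coord_eq[OF shift_in_invlim[OF f_range x], of "Suc n"] n by simp
  also have "\<dots> = ray_map \<rho> (ray_coord x)"
    using ray_coord_eq[OF x n] by simp
  finally show ?thesis .
qed

lemma invlim_eq_of_above_rho: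
  assumes x: "x \<in> invlim f" and y: "y \<in> invlim f" and "\<rho> < x N" "x N = y N"
  shows "x = y"
proof -
  have above: "x (N + j) = y (N + j)" for j
  proof (induction j)
    case (Suc j)
    have "\<rho> < x (N + j)" "\<rho> < y (N + j)"
      using invlim_above_rho_mono[OF x \<open>\<rho> < x N\<close>] invlim_above_rho_mono[OF y, of N]
        \<open>\<rho> < x N\<close> \<open>x N = y N\<close> by auto
    then have "f1 \<rho> (x (Suc (N + j))) = f1 \<rho> (y (Suc (N + j)))"
      using Suc invlim_above_rho(2)[OF x] invlim_above_rho(2)[OF y] by simp
    then show ?case using rho_less_1 by (simp add: f1_def)
  qed (simp add: \<open>x N = y N\<close>)
  have below: "x (N - j) = y (N - j)" for j
  proof (induction j)
    case (Suc j)
    show ?case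
    proof (cases "j < N")
      case True
      then have "Suc (N - Suc j) = N - j" by simp
      then show ?thesis using Suc invlimD(2)[OF x, of "N - Suc j"] invlimD(2)[OF y, of "N - Suc j"]
        by metis
    qed (use Suc in simp)
  qed (simp add: \<open>x N = y N\<close>)
  show "x = y"
  proof
    fix k show "x k = y k"
      using above[of "k - N"] below[of "N - k"] by (cases "k \<le> N") simp_all
  qed
qed

lemma inj_on_ray_coord: "inj_on ray_coord (invlim1 f)"
proof (rule inj_onI)
  fix x y assume x1: "x \<in> invlim1 f" and y1: "y \<in> invlim1 f" and eq: "ray_coord x = ray_coord y"
  have x: "x \<in> invlim f" and y: "y \<in> invlim f" using x1 y1 by (auto simp: invlim1_def)
  obtain n m where "\<rho> < x n" "\<rho> < y m"
    using invlim1_obtain_above_rho x1 y1 by metis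
  define N where "N = max n m"
  have xN: "\<rho> < x N" and yN: "\<rho> < y N"
    using invlim_above_rho_mono[OF x \<open>\<rho> < x n\<close>] invlim_above_rho_mono[OF y \<open>\<rho> < y m\<close>]
    by (auto simp: N_def)
  have "Phi (x N) = Phi (y N)"
    using eq ray_coord_eq[OF x xN] ray_coord_eq[OF y yN]
      inj_fn[OF strict_mono_imp_inj_on[OF strict_mono_ray_map[OF rho_less_1]]]
    by (auto dest: injD)
  then have "x N = y N"
    using strict_mono_on_imp_inj_on[OF strict_mono_on_Phi] invlimD(1)[OF x] invlimD(1)[OF y]
    by (auto dest: inj_onD)
  then show "x = y" by (rule invlim_eq_of_above_rho[OF x y xN])
qed

lemma ray_coord_attains_positive:
  assumes "t \<in> {0<..1}"
  shows "t \<in> ray_coord ` invlim1 f"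
proof -
  have "t \<in> Phi ` {0..1}" using Phi_image assms by auto
  then obtain z where z: "z \<in> {0..1}" "Phi z = t" by blast
  have "z \<noteq> 0" using z Phi_0 assms by auto
  with z have "0 < z" by simp
  define x where "x j = 1 - (1 - \<rho>) ^ j * (1 - z)" for j
  have pow: "0 \<le> (1 - \<rho>) ^ j" "(1 - \<rho>) ^ j \<le> 1" for j
    using rho_pos rho_less_1 by (auto simp: power_le_one)
  have prod: "0 \<le> (1 - \<rho>) ^ j * (1 - z)" "(1 - \<rho>) ^ j * (1 - z) \<le> 1 - z" for j
    using pow[of j] z by (auto simp: mult_left_le_one_le)
  have x_range: "x j \<in> {0..1}" for j
    using prod[of j] z by (simp add: x_def)
  have x_above: "\<rho> < x (Suc j)" for j
  proof -
    have "(1 - \<rho>) ^ j * (1 - z) < 1"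
      using prod(2)[of j] \<open>0 < z\<close> by linarith
    then have "(1 - \<rho>) * ((1 - \<rho>) ^ j * (1 - z)) < 1 - \<rho>"
      using rho_less_1 by simp
    then show ?thesis by (simp add: x_def algebra_simps)
  qed
  have "f (x (Suc j)) = x j" for j
    using x_above[of j] rho_less_1 by (simp add: f_above f1_def x_def field_simps)
  then have x: "x \<in> invlim f" using x_range by (simp add: invlim_def)
  then have "x \<in> invlim1 f" using invlim1_iff x_above by blast
  moreover have "ray_coord x = Phi (x 0)"
    using ray_coord_eq[OF x x_above[of 0]] ray_map_Phi[OF x x_above[of 0]] by simp
  moreover have "x 0 = z" by (simp add: x_def)
  ultimately show ?thesis using z by (metis image_eqI)
qed

lemma ray_coord_image: "ray_coord ` invlim1 f = {..1}"
proof
  show "ray_coord ` invlim1 f \<subseteq> {..1}" using ray_coord_le_1 by auto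
  have closed_ray_map: "(ray_map \<rho> ^^ k) s \<in> ray_coord ` invlim1 f"
    if "s \<in> ray_coord ` invlim1 f" for s k
  proof (induction k)
    case (Suc k)
    then obtain x where "x \<in> invlim1 f" "(ray_map \<rho> ^^ k) s = ray_coord x" by blast
    then have "shift f x \<in> invlim1 f" "(ray_map \<rho> ^^ Suc k) s = ray_coord (shift f x)"
      using shift_in_invlim1_iff ray_coord_shift by (auto simp: invlim1_def)
    then show ?case by blast
  qed (simp add: that)
  show "{..1} \<subseteq> ray_coord ` invlim1 f"
  proof
    fix t :: real assume "t \<in> {..1}"
    show "t \<in> ray_coord ` invlim1 f"
    proof (cases "0 < t")
      case True
      then show ?thesis using ray_coord_attains_positive \<open>t \<in> {..1}\<close> by simp
    next
      case False
      define k where "k = nat \<lfloor>- t / \<rho>\<rfloor> + 1"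
      have "0 \<le> - t / \<rho>" using False rho_pos by (simp add: divide_nonpos_pos)
      then have "real k = of_int \<lfloor>- t / \<rho>\<rfloor> + 1" by (simp add: k_def)
      then have "- t / \<rho> < real k" "real k - 1 \<le> - t / \<rho>" by linarith+
      then have s: "t + real k * \<rho> \<in> {0<..1}" "t + real k * \<rho> \<le> \<rho>"
        using rho_pos rho_less_1 by (auto simp: field_simps)
      have "(ray_map \<rho> ^^ k) (t + real k * \<rho>) = t"
        using funpow_ray_map_below[OF less_imp_le[OF rho_pos] s(2)] by simp
      then show ?thesis using closed_ray_map[OF ray_coord_attains_positive[OF s(1)], of k] by simp
    qed
  qed
qed

definition conj_map :: "(nat \<Rightarrow> real) \<Rightarrow> real + real" where
  "conj_map x = (if x \<in> invlim1 f then Inl (ray_coord x) else Inr (phi (x 0)))"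

lemma conj_map_shift:
  assumes "x \<in> invlim f"
  shows "conj_map (shift f x) = gmap \<rho> (conj_map x)"
proof (cases "x \<in> invlim1 f")
  case True
  then show ?thesis
    using shift_in_invlim1_iff[OF assms] ray_coord_shift by (simp add: conj_map_def gmap_Inl)
next
  case False
  have "x 0 \<in> {0..\<rho>}" using invlimD(1)[OF assms] not_invlim1_below[OF assms False] by auto
  then have "phi (shift f x 0) = \<rho> - phi (x 0)" by (simp add: f_below phi_F)
  then show ?thesis
    using shift_in_invlim1_iff[OF assms] False by (simp add: conj_map_def gmap_Inr)
qed

lemma conj_map_image_invlim1: "conj_map ` invlim1 f = Inl ` {..1}"
proof -
  have "conj_map ` invlim1 f = Inl ` ray_coord ` invlim1 f"
    unfolding image_image by (rule image_cong) (simp_all add: conj_map_def)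
  then show ?thesis by (simp add: ray_coord_image)
qed

lemma conj_map_image_not_invlim1: "conj_map ` (invlim f - invlim1 f) = Inr ` {0..\<rho>}"
proof
  show "conj_map ` (invlim f - invlim1 f) \<subseteq> Inr ` {0..\<rho>}"
    using invlimD(1) not_invlim1_below phi_range by (fastforce simp: conj_map_def)
  show "Inr ` {0..\<rho>} \<subseteq> conj_map ` (invlim f - invlim1 f)"
  proof
    fix p :: "real + real" assume "p \<in> Inr ` {0..\<rho>}"
    then obtain u where "u \<in> {0..\<rho>}" "p = Inr u" by blast
    then obtain a where a: "a \<in> {0..\<rho>}" "p = Inr (phi a)"
      using phi_image by (metis imageE)
    define x where "x n = (if even n then a else F a)" for n :: nat
    have x_below: "x n \<in> {0..\<rho>}" for n
      using F_range[OF a(1)] a(1) by (simp add: x_def)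
    then have "f (x (Suc n)) = x n" for n
      using F_F[OF a(1)] F_range[OF a(1)] a(1) by (simp add: f_below x_def)
    moreover have "x n \<in> {0..1}" for n
      using x_below[of n] rho_less_1 by auto
    ultimately have x: "x \<in> invlim f" by (simp add: invlim_def)
    then have "x \<notin> invlim1 f" using invlim1_iff x_below by (simp add: not_less)
    moreover have "conj_map x = p" using calculation a by (simp add: conj_map_def x_def)
    ultimately show "p \<in> conj_map ` (invlim f - invlim1 f)" using x by blast
  qed
qed

lemma conj_map_image: "conj_map ` invlim f = Ycarrier \<rho>"
proof -
  have "invlim f = invlim1 f \<union> (invlim f - invlim1 f)" by (auto simp: invlim1_def)
  then show ?thesis
    using conj_map_image_invlim1 conj_map_image_not_invlim1
    by (metis Ycarrier_def image_Un)
qed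

lemma inj_on_conj_map: "inj_on conj_map (invlim f)"
proof (rule inj_onI)
  fix x y assume x: "x \<in> invlim f" and y: "y \<in> invlim f" and eq: "conj_map x = conj_map y"
  show "x = y"
  proof (cases "x \<in> invlim1 f")
    case True
    then have "y \<in> invlim1 f" using eq by (auto simp: conj_map_def split: if_splits)
    moreover have "ray_coord x = ray_coord y" using True calculation eq by (simp add: conj_map_def)
    ultimately show ?thesis using inj_onD[OF inj_on_ray_coord] True by blast
  next
    case False
    then have y': "y \<notin> invlim1 f" using eq by (auto simp: conj_map_def split: if_splits)
    have "x 0 \<in> {0..\<rho>}" "y 0 \<in> {0..\<rho>}"
      using invlimD(1)[OF x] invlimD(1)[OF y] not_invlim1_below[OF x False]
        not_invlim1_below[OF y y'] by auto
    moreover have "phi (x 0) = phi (y 0)" using eq False y' by (simp add: conj_map_def)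
    ultimately have "x 0 = y 0"
      using inj_onD[OF strict_mono_on_imp_inj_on[OF strict_mono_on_phi]] by blast
    show ?thesis
    proof
      fix n
      have "x n = (if even n then x 0 else F (x 0))" "y n = (if even n then y 0 else F (y 0))"
        using invlim_alternating[OF x] invlim_alternating[OF y]
          not_invlim1_below[OF x False] not_invlim1_below[OF y y'] by auto
      then show "x n = y n" using \<open>x 0 = y 0\<close> by simp
    qed
  qed
qed

lemma conj_map_near_invlim1:
  assumes x: "x \<in> invlim1 f" and "e > 0"
  shows "\<exists>W. openin (powertop_real UNIV) W \<and> x \<in> W \<and>
           (\<forall>y\<in>invlim f \<inter> W. conj_map y \<in> ray_nbhd (ray_coord x) e)"
proof -
  have xX: "x \<in> invlim f" using x by (simp add: invlim1_def)
  obtain n where n: "\<rho> < x n" using invlim1_obtain_above_rho[OF x] .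
  have "continuous_on {0..1} ((ray_map \<rho> ^^ n) \<circ> Phi)"
    by (intro continuous_on_compose continuous_on_Phi
        continuous_on_subset[OF continuous_on_funpow_ray_map[OF rho_less_1]]) simp
  moreover have xn: "x n \<in> {0..1}" using invlimD(1)[OF xX] .
  ultimately obtain d where "d > 0" and d: "\<And>z. z \<in> {0..1} \<Longrightarrow> \<bar>z - x n\<bar> < d \<Longrightarrow>
      \<bar>(ray_map \<rho> ^^ n) (Phi z) - (ray_map \<rho> ^^ n) (Phi (x n))\<bar> < e"
    using \<open>e > 0\<close> unfolding continuous_on_iff dist_real_def by fastforce
  define W where "W = {y. \<forall>i\<le>n. \<bar>y i - x i\<bar> < min d (x n - \<rho>)}"
  have "conj_map y \<in> ray_nbhd (ray_coord x) e" if y: "y \<in> invlim f \<inter> W" for y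
  proof -
    have yX: "y \<in> invlim f" using y by simp
    have close: "\<bar>y n - x n\<bar> < min d (x n - \<rho>)" using y by (simp add: W_def)
    then have yn: "\<rho> < y n" by (auto simp: abs_less_iff)
    then have y1: "y \<in> invlim1 f" using invlim1_iff[OF yX] by blast
    have "\<bar>ray_coord y - ray_coord x\<bar> < e"
      using d[OF invlimD(1)[OF yX]] close ray_coord_eq[OF yX yn] ray_coord_eq[OF xX n] by simp
    with ray_coord_le_1[OF y1] y1 show ?thesis
      by (auto simp: conj_map_def ray_nbhd_def abs_less_iff)
  qed
  moreover have "x \<in> W" using \<open>d > 0\<close> n by (simp add: W_def)
  moreover have "openin (powertop_real UNIV) W" unfolding W_def by (rule openin_cylinder)
  ultimately show ?thesis by (intro exI[of _ W]) simp
qed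

lemma below_rho_near_not_invlim1:
  assumes x: "x \<in> invlim f" "x \<notin> invlim1 f" and y: "y \<in> invlim f"
    and close: "\<And>i. i \<le> Suc K \<Longrightarrow> \<bar>y i - x i\<bar> < (1 - \<rho>) * \<rho>"
    and "i \<le> K"
  shows "y i \<le> \<rho>"
proof (rule ccontr)
  assume "\<not> y i \<le> \<rho>"
  then have "\<rho> < y i" by simp
  then have "y (Suc i) = \<rho> + (1 - \<rho>) * y i"
    using invlim_above_rho(2)[OF y] rho_less_1 by (simp add: f1_def field_simps)
  moreover have "(1 - \<rho>) * \<rho> < (1 - \<rho>) * y i"
    using \<open>\<rho> < y i\<close> rho_less_1 by simp
  moreover have "x (Suc i) \<le> \<rho>" using not_invlim1_below[OF x] .
  ultimately show False using close[of "Suc i"] \<open>i \<le> K\<close> by (simp add: abs_less_iff)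
qed

lemma invlim1_first_exit:
  assumes "y \<in> invlim1 f" "y 0 \<le> \<rho>"
  obtains m where "\<forall>i\<le>m. y i \<le> \<rho>" "\<rho> < y (Suc m)"
proof -
  have y: "y \<in> invlim f" using assms(1) by (simp add: invlim1_def)
  define m where "m = (LEAST m. \<rho> < y (Suc m))"
  obtain n where "\<rho> < y n" using invlim1_obtain_above_rho[OF assms(1)] .
  then have "\<rho> < y (Suc n)" using invlim_above_rho(1)[OF y] by blast
  then have "\<rho> < y (Suc m)" unfolding m_def by (rule LeastI)
  moreover have "y i \<le> \<rho>" if "i \<le> m" for i
  proof (cases i)
    case (Suc j)
    then have "j < m" using that by simp
    then show ?thesis using not_less_Least[of j "\<lambda>m. \<rho> < y (Suc m)"] Suc by (simp add: m_def)
  qed (use assms(2) in simp)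
  ultimately show ?thesis using that by blast
qed

lemma ray_coord_first_exit:
  assumes y: "y \<in> invlim f" and below: "\<forall>i\<le>m. y i \<le> \<rho>" and "\<rho> < y (Suc m)"
  shows "ray_coord y = ray_approx \<rho> m (phi (y 0))"
proof -
  have ym: "y m \<in> {0..\<rho>}" "y 0 \<in> {0..\<rho>}" using invlimD(1)[OF y] below by auto
  have "ray_coord y = (ray_map \<rho> ^^ m) (ray_map \<rho> (Phi (y (Suc m))))"
    using ray_coord_eq[OF y \<open>\<rho> < y (Suc m)\<close>] by (simp add: funpow_Suc_right del: funpow.simps)
  also have "\<dots> = phi (y m) - real m * \<rho>"
    using ray_map_Phi[OF y \<open>\<rho> < y (Suc m)\<close>] Phi_below[OF ym(1)] phi_range[OF ym(1)]
      funpow_ray_map_below[of \<rho> "phi (y m)" m] rho_pos by simp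
  also have "\<dots> = ray_approx \<rho> m (phi (y 0))"
    using invlim_alternating[OF y below] phi_F[OF ym(2)] by (simp add: ray_approx_eq algebra_simps)
  finally show ?thesis .
qed

lemma conj_map_near_not_invlim1:
  assumes x: "x \<in> invlim f" "x \<notin> invlim1 f" and "e > 0"
  shows "\<exists>W. openin (powertop_real UNIV) W \<and> x \<in> W \<and>
           (\<forall>y\<in>invlim f \<inter> W. conj_map y \<in> end_nbhd \<rho> (phi (x 0)) e N)"
proof -
  have x0: "x 0 \<in> {0..\<rho>}" using invlimD(1)[OF x(1)] not_invlim1_below[OF x] by auto
  obtain d where "d > 0" and d: "\<And>z. z \<in> {0..\<rho>} \<Longrightarrow> \<bar>z - x 0\<bar> < d \<Longrightarrow> \<bar>phi z - phi (x 0)\<bar> < e"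
    using continuous_on_phi x0 \<open>e > 0\<close> unfolding continuous_on_iff dist_real_def by metis
  define \<eta> where "\<eta> = min d ((1 - \<rho>) * \<rho>)"
  define W where "W = {y. \<forall>i\<le>Suc (Suc N). \<bar>y i - x i\<bar> < \<eta>}"
  have "conj_map y \<in> end_nbhd \<rho> (phi (x 0)) e N" if y: "y \<in> invlim f \<inter> W" for y
  proof -
    have yX: "y \<in> invlim f" using y by simp
    have below: "y i \<le> \<rho>" if "i \<le> Suc N" for i
      using below_rho_near_not_invlim1[OF x yX _ that] y by (force simp: W_def \<eta>_def)
    have y0: "y 0 \<in> {0..\<rho>}" using invlimD(1)[OF yX] below[of 0] by auto
    have phi_close: "\<bar>phi (y 0) - phi (x 0)\<bar> < e"
      using d[OF y0] y by (force simp: W_def \<eta>_def)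
    show ?thesis
    proof (cases "y \<in> invlim1 f")
      case False
      then show ?thesis using phi_close phi_range[OF y0] by (simp add: conj_map_def end_nbhd_def)
    next
      case True
      obtain m where below_m: "\<forall>i\<le>m. y i \<le> \<rho>" and m: "\<rho> < y (Suc m)"
        using invlim1_first_exit[OF True below[of 0]] by auto
      have "N < m" using below[of "Suc m"] m by (cases "N < m") auto
      have "\<bar>ray_coord y - ray_approx \<rho> m (phi (x 0))\<bar> < e"
        using ray_coord_first_exit[OF yX below_m m] phi_close
          abs_ray_approx_diff[of \<rho> m "phi (y 0)" "phi (x 0)"] by simp
      then have "Inl (ray_coord y) \<in> ray_nbhd (ray_approx \<rho> m (phi (x 0))) e"
        using ray_coord_le_1[OF True] unfolding ray_nbhd_def
        by (intro imageI) (auto simp: abs_less_iff)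
      then show ?thesis using True \<open>N < m\<close> by (auto simp: conj_map_def end_nbhd_def)
    qed
  qed
  moreover have "x \<in> W" using \<open>d > 0\<close> rho_pos rho_less_1 by (simp add: W_def \<eta>_def)
  moreover have "openin (powertop_real UNIV) W" unfolding W_def by (rule openin_cylinder)
  ultimately show ?thesis by (intro exI[of _ W]) simp
qed

lemma conj_map_near:
  assumes "x \<in> invlim f" "B \<in> Ybasic \<rho> (conj_map x)"
  shows "\<exists>W. openin (powertop_real UNIV) W \<and> x \<in> W \<and> (\<forall>y\<in>invlim f \<inter> W. conj_map y \<in> B)"
proof (cases "x \<in> invlim1 f")
  case True
  then have "B \<in> Ybasic \<rho> (Inl (ray_coord x))" using assms(2) by (simp add: conj_map_def)
  then obtain e where "e > 0" and B_eq: "B = ray_nbhd (ray_coord x) e"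
    unfolding Ybasic_Inl by blast
  show ?thesis unfolding B_eq by (rule conj_map_near_invlim1[OF True \<open>e > 0\<close>])
next
  case False
  then have "B \<in> Ybasic \<rho> (Inr (phi (x 0)))" using assms(2) by (simp add: conj_map_def)
  then obtain e N where "e > 0" and B_eq: "B = end_nbhd \<rho> (phi (x 0)) e N"
    unfolding Ybasic_Inr by blast
  show ?thesis unfolding B_eq by (rule conj_map_near_not_invlim1[OF assms(1) False \<open>e > 0\<close>])
qed

lemma continuous_map_conj_map: "continuous_map (invlim_top f) (Ytop \<rho>) conj_map"
  unfolding continuous_map
proof (intro conjI allI impI)
  show "conj_map ` topspace (invlim_top f) \<subseteq> topspace (Ytop \<rho>)"
    using conj_map_image by simp
  fix U assume U: "openin (Ytop \<rho>) U"
  show "openin (invlim_top f) {x \<in> topspace (invlim_top f). conj_map x \<in> U}"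
  proof (subst openin_subopen, intro ballI)
    fix x assume x: "x \<in> {x \<in> topspace (invlim_top f). conj_map x \<in> U}"
    then have "conj_map x \<in> U" by simp
    then obtain B where B: "B \<in> Ybasic \<rho> (conj_map x)" "B \<subseteq> U"
      using U unfolding openin_Ytop by blast
    obtain W where W: "openin (powertop_real UNIV) W" "x \<in> W" "\<forall>y\<in>invlim f \<inter> W. conj_map y \<in> B"
      using conj_map_near[OF _ B(1)] x by auto
    have "openin (invlim_top f) (W \<inter> invlim f)"
      unfolding invlim_top_def by (rule openin_subtopology_Int[OF W(1)])
    moreover have "W \<inter> invlim f \<subseteq> {x \<in> topspace (invlim_top f). conj_map x \<in> U}"
    proof
      fix y assume "y \<in> W \<inter> invlim f"
      then have "y \<in> invlim f" "conj_map y \<in> B" using W(3) by auto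
      with B(2) show "y \<in> {x \<in> topspace (invlim_top f). conj_map x \<in> U}" by auto
    qed
    moreover have "x \<in> W \<inter> invlim f" using W(2) x by simp
    ultimately show "\<exists>T. openin (invlim_top f) T \<and> x \<in> T \<and> T \<subseteq> {x \<in> topspace (invlim_top f). conj_map x \<in> U}"
      by blast
  qed
qed

lemma homeomorphic_map_conj_map: "homeomorphic_map (invlim_top f) (Ytop \<rho>) conj_map"
proof (rule continuous_imp_homeomorphic_map[OF continuous_map_conj_map
      compact_space_invlim_top[OF continuous_on_f] Hausdorff_space_Ytop[OF rho_pos]])
  show "conj_map ` topspace (invlim_top f) = topspace (Ytop \<rho>)"
    using conj_map_image by simp
  show "inj_on conj_map (topspace (invlim_top f))"
    using inj_on_conj_map by simp
qed

end

section \<open>The fractional linear branch\<close>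

lemma f0_eq_of_fixed_point:
  assumes "0 < \<rho>" "0 < \<delta>" "\<rho> = f0 \<rho> \<delta> \<gamma> \<alpha> 0"
  shows "f0 \<rho> \<delta> \<gamma> \<alpha> x = \<delta> * (\<rho> - x) / (\<gamma> * x + \<delta>)"
proof -
  have "(\<delta> + \<alpha>) * \<rho> = 0" using assms(2,3) by (simp add: f0_def field_simps)
  then have "\<alpha> = - \<delta>" using assms(1) by simp
  then show ?thesis by (simp add: f0_def algebra_simps)
qed

lemma f0_denominator_pos:
  fixes \<rho> \<delta> \<gamma> x :: real
  assumes "0 < \<rho>" "0 < \<delta>" "- \<delta> / \<rho> < \<gamma>" "x \<in> {0..\<rho>}"
  shows "0 < \<gamma> * x + \<delta>"
proof (cases "0 \<le> \<gamma>")
  case True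
  then have "0 \<le> \<gamma> * x" using assms(4) by simp
  with assms(2) show ?thesis by simp
next
  case False
  then have "\<gamma> * \<rho> \<le> \<gamma> * x" using assms(4) by (simp add: mult_left_mono_neg)
  moreover have "0 < \<gamma> * \<rho> + \<delta>" using assms(1,3) by (simp add: field_simps)
  ultimately show ?thesis by simp
qed

lemma f0_involutive_branch:
  assumes "0 < \<rho>" "\<rho> < 1" "0 < \<delta>" "- \<delta> / \<rho> < \<gamma>" and fixed: "\<rho> = f0 \<rho> \<delta> \<gamma> \<alpha> 0"
  shows "involutive_branch \<rho> (f0 \<rho> \<delta> \<gamma> \<alpha>)"
proof
  note f0_eq = f0_eq_of_fixed_point[OF assms(1,3) fixed]
  note den = f0_denominator_pos[OF assms(1,3,4)]
  have den_rho: "0 < \<gamma> * \<rho> + \<delta>" using den[of \<rho>] assms(1) by simp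
  show "continuous_on {0..\<rho>} (f0 \<rho> \<delta> \<gamma> \<alpha>)"
    unfolding f0_def by (intro continuous_intros) (use den in force)
  show "f0 \<rho> \<delta> \<gamma> \<alpha> y < f0 \<rho> \<delta> \<gamma> \<alpha> x" if "0 \<le> x" "x < y" "y \<le> \<rho>" for x y
  proof -
    have "\<delta> * (\<rho> - x) * (\<gamma> * y + \<delta>) - \<delta> * (\<rho> - y) * (\<gamma> * x + \<delta>) = \<delta> * (y - x) * (\<gamma> * \<rho> + \<delta>)"
      by (simp add: algebra_simps)
    also have "\<dots> > 0" using den_rho assms(3) that by simp
    finally show ?thesis using den[of x] den[of y] that by (simp add: f0_eq divide_simps)
  qed
  show "f0 \<rho> \<delta> \<gamma> \<alpha> (f0 \<rho> \<delta> \<gamma> \<alpha> x) = x" if "x \<in> {0..\<rho>}" for x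
  proof -
    have d: "0 < \<gamma> * x + \<delta>" using den that by simp
    have "\<rho> - f0 \<rho> \<delta> \<gamma> \<alpha> x = x * (\<gamma> * \<rho> + \<delta>) / (\<gamma> * x + \<delta>)"
      "\<gamma> * f0 \<rho> \<delta> \<gamma> \<alpha> x + \<delta> = \<delta> * (\<gamma> * \<rho> + \<delta>) / (\<gamma> * x + \<delta>)"
      using d by (simp_all add: f0_eq field_simps)
    then show ?thesis
      using d den_rho assms(3) by (simp add: f0_eq[of "f0 \<rho> \<delta> \<gamma> \<alpha> x"])
  qed
qed (use assms fixed in simp_all)

theorem theorem3:
  fixes \<rho> \<delta> \<gamma> \<alpha> :: real
  assumes "0 < \<rho>" "\<rho> < 1" "\<delta> > 0" "\<gamma> > - \<delta> / \<rho>"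
    and "- \<delta> / \<rho> < \<alpha>" "\<alpha> < 0"
    and "\<rho> = f0 \<rho> \<delta> \<gamma> \<alpha> 0"
  shows "(\<exists>h. homeomorphic_map (invlim_top (fmap \<rho> \<delta> \<gamma> \<alpha>)) (Ytop \<rho>) h
            \<and> (\<forall>x\<in>invlim (fmap \<rho> \<delta> \<gamma> \<alpha>).
                 h (shift (fmap \<rho> \<delta> \<gamma> \<alpha>) x) = gmap \<rho> (h x))
            \<and> h ` invlim1 (fmap \<rho> \<delta> \<gamma> \<alpha>) = Inl ` {..1}
            \<and> h ` (invlim (fmap \<rho> \<delta> \<gamma> \<alpha>) - invlim1 (fmap \<rho> \<delta> \<gamma> \<alpha>)) = Inr ` {0..\<rho>})
    \<and> homeomorphic_map (Ytop \<rho>) (Ytop \<rho>) (gmap \<rho>)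
    \<and> (\<forall>x\<in>{..1}. \<forall>y\<in>{..1}. x < y \<longrightarrow>
           (\<exists>u v. gmap \<rho> (Inl x) = Inl u \<and> gmap \<rho> (Inl y) = Inl v \<and> u < v))
    \<and> gmap \<rho> (Inl 1) = Inl 1
    \<and> (\<forall>x\<in>{0..\<rho>}. gmap \<rho> (gmap \<rho> (Inr x)) = Inr x)"
proof -
  interpret involutive_branch \<rho> "f0 \<rho> \<delta> \<gamma> \<alpha>"
    using f0_involutive_branch assms by blast
  have fmap_eq: "fmap \<rho> \<delta> \<gamma> \<alpha> = f" by (simp add: fun_eq_iff fmap_def f_def)
  have conj: "\<exists>h. homeomorphic_map (invlim_top f) (Ytop \<rho>) h \<and> (\<forall>x\<in>invlim f. h (shift f x) = gmap \<rho> (h x))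
      \<and> h ` invlim1 f = Inl ` {..1} \<and> h ` (invlim f - invlim1 f) = Inr ` {0..\<rho>}"
    using homeomorphic_map_conj_map conj_map_shift conj_map_image_invlim1 conj_map_image_not_invlim1
    by blast
  have "homeomorphic_map (Ytop \<rho>) (Ytop \<rho>) (gmap \<rho>)"
    using homeomorphic_map_conjugate[OF homeomorphic_map_conj_map
        homeomorphic_map_shift[OF continuous_on_f f_range]] conj_map_shift by simp
  moreover have "\<exists>u v. gmap \<rho> (Inl x) = Inl u \<and> gmap \<rho> (Inl y) = Inl v \<and> u < v" if "x < y" for x y
    using strict_mono_ray_map[OF rho_less_1] that by (simp add: gmap_Inl strict_mono_def)
  ultimately show ?thesis
    unfolding fmap_eq using conj ray_map_1[OF rho_less_1] by (simp add: gmap_Inl gmap_Inr)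
qed

end
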